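(* Let $p\in\mathbb Z$ with $1\le p\le m$, let $M$ be a polynomial $\mathfrak{gl}_{m|n}$-module and let $\lambda$ be a $(p|n)$-hook partition. Then $$\overline{\mathfrak{tr}}_{p|n}(M)^{\rm sing}_{\bar\lambda^{p|n}}=M^{\sigma_p\text{-}{\rm sing}}_{\bar\lambda^{\sigma_p}}.$$
   Context: $I_{m|n}=\{1,\dots,m\}\cup\{\tfrac12,\dots,n-\tfrac12\}$ with standard order $1<\dots<m<\tfrac12<\dots<n-\tfrac12$ (integers even, half-integers odd); $\mathfrak{gl}_{m|n}$ has basis $E_{i,j}$, Cartan subalgebra $\mathfrak h_{m|n}$ spanned by $E_{i,i}$, dual basis $\epsilon_i$. A module is polynomial if $\mathfrak h_{m|n}$-semisimple with weights in $\sum_{i\in I_{m|n}}\mathbb Z_{\ge0}\epsilon_i$. $\mathfrak{gl}_{p|n}\subseteq\mathfrak{gl}_{m|n}$ is the span of $E_{i,j}$ with $i,j\in I_{p|n}=\{1,\dots,p\}\cup\{\tfrac12,\dots,n-\tfrac12\}$, and $\overline{\mathfrak{tr}}_{p|n}(M)=\bigoplus_\nu M_\nu$, the sum over weights $\nu$ of $M$ with $\nu(E_{i,i})=0$ for $i=p+1,\dots,m$, a $\mathfrak{gl}_{p|n}$-module. For a $(p|n)$-hook partition $\lambda$ ($\lambda_{p+1}\le n$), with conjugate $\lambda'$ and $\langle x\rangle=\max(x,0)$: $\bar\lambda^{p|n}=\sum_{i=1}^p\lambda_i\epsilon_i+\sum_{i=1}^n\langle\lambda'_i-p\rangle\epsilon_{i-1/2}$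 (regarded as a weight of $\mathfrak{gl}_{m|n}$ vanishing on $E_{i,i}$, $i>p$), and $\bar\lambda^{\sigma_p}=\sum_{i=1}^p\lambda_i\epsilon_i+\sum_{i=1}^n\langle\lambda'_i-p\rangle\epsilon_{i-1/2}+\sum_{i=p+1}^m\langle\lambda_i-n\rangle\epsilon_i$. For a $\mathfrak{gl}_{p|n}$-module $N$, $N^{\rm sing}_\mu=\{v\in N_\mu: E_{i,j}v=0 \text{ for } i<j \text{ in } I_{p|n}\}$ (standard order). Let $<_{\sigma_p}$ be the total order $1<\dots<p<\tfrac12<\dots<n-\tfrac12<p+1<\dots<m$ on $I_{m|n}$; $M^{\sigma_p\text{-sing}}_\mu=\{v\in M_\mu: E_{i,j}v=0 \text{ for all } i<_{\sigma_p}j\}$. *)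

theory Defs
  imports Complex_Main
begin

(* Index set I_{m|n}: Ev i stands for the even index i (1 <= i <= m),
   Od k stands for the odd (half-integer) index k - 1/2 (1 <= k <= n). *)
datatype idx = Ev nat | Od nat

definition Idx :: "nat \<Rightarrow> nat \<Rightarrow> idx set" where
  "Idx m n = {Ev i |i. 1 \<le> i \<and> i \<le> m} \<union> {Od k |k. 1 \<le> k \<and> k \<le> n}"

fun ipar :: "idx \<Rightarrow> bool" where
  "ipar (Ev _) = False"
| "ipar (Od _) = True"

fun std_less :: "idx \<Rightarrow> idx \<Rightarrow> bool" where
  "std_less (Ev a) (Ev b) = (a < b)"
| "std_less (Ev a) (Od b) = True"
| "std_less (Od a) (Ev b) = False"
| "std_less (Od a) (Od b) = (a < b)"

(* order <_{sigma_p}: 1 < ... < p < 1/2 < ... < n - 1/2 < p+1 < ... < m *)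
fun sig_less :: "nat \<Rightarrow> idx \<Rightarrow> idx \<Rightarrow> bool" where
  "sig_less p (Ev a) (Ev b) = (if a \<le> p then (p < b \<or> a < b) else (p < b \<and> a < b))"
| "sig_less p (Ev a) (Od b) = (a \<le> p)"
| "sig_less p (Od a) (Ev b) = (p < b)"
| "sig_less p (Od a) (Od b) = (a < b)"

(* A (Z/2-graded) gl_{m|n}-module over the complex numbers: a complex vector
   space with scalar multiplication sc, a parity decomposition V False (+) V True,
   and linear operators E i j (the action of E_{i,j}) satisfying the
   supercommutator relations
   [E_ij, E_kl] = delta_jk E_il - (-1)^{(|i|+|j|)(|k|+|l|)} delta_li E_kj. *)
definition is_glmn_module ::
  "nat \<Rightarrow> nat \<Rightarrow> (complex \<Rightarrow> 'v::ab_group_add \<Rightarrow> 'v) \<Rightarrow> (idx \<Rightarrow> idx \<Rightarrow> 'v \<Rightarrow> 'v)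
     \<Rightarrow> (bool \<Rightarrow> 'v set) \<Rightarrow> bool" where
  "is_glmn_module m n sc E V \<longleftrightarrow>
     vector_space sc
   \<and> (\<forall>i\<in>Idx m n. \<forall>j\<in>Idx m n. Vector_Spaces.linear sc sc (E i j))
   \<and> module.subspace sc (V False) \<and> module.subspace sc (V True)
   \<and> V False \<inter> V True = {0}
   \<and> (\<forall>v. \<exists>a b. a \<in> V False \<and> b \<in> V True \<and> v = a + b)
   \<and> (\<forall>i\<in>Idx m n. \<forall>j\<in>Idx m n. \<forall>a. E i j ` V a \<subseteq> V (a \<noteq> (ipar i \<noteq> ipar j)))
   \<and> (\<forall>i\<in>Idx m n. \<forall>j\<in>Idx m n. \<forall>k\<in>Idx m n. \<forall>l\<in>Idx m n. \<forall>v.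
        (let s = (\<lambda>x. if (ipar i \<noteq> ipar j) \<and> (ipar k \<noteq> ipar l) then - x else x) in
         E i j (E k l v) - s (E k l (E i j v))
           = (if j = k then E i l v else 0) - s (if l = i then E k j v else 0)))"

definition weight_space ::
  "nat \<Rightarrow> nat \<Rightarrow> (complex \<Rightarrow> 'v::ab_group_add \<Rightarrow> 'v) \<Rightarrow> (idx \<Rightarrow> idx \<Rightarrow> 'v \<Rightarrow> 'v)
     \<Rightarrow> (idx \<Rightarrow> complex) \<Rightarrow> 'v set" where
  "weight_space m n sc E \<mu> = {v. \<forall>i\<in>Idx m n. E i i v = sc (\<mu> i) v}"

definition polynomial_module ::
  "nat \<Rightarrow> nat \<Rightarrow> (complex \<Rightarrow> 'v::ab_group_add \<Rightarrow> 'v) \<Rightarrow> (idx \<Rightarrow> idx \<Rightarrow> 'v \<Rightarrow> 'v) \<Rightarrow> bool" where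
  "polynomial_module m n sc E \<longleftrightarrow>
     module.span sc (\<Union>\<mu>. weight_space m n sc E \<mu>) = UNIV
   \<and> (\<forall>\<mu>. weight_space m n sc E \<mu> \<noteq> {0} \<longrightarrow> (\<forall>i\<in>Idx m n. \<mu> i \<in> \<nat>))"

definition trbar ::
  "nat \<Rightarrow> nat \<Rightarrow> nat \<Rightarrow> (complex \<Rightarrow> 'v::ab_group_add \<Rightarrow> 'v) \<Rightarrow> (idx \<Rightarrow> idx \<Rightarrow> 'v \<Rightarrow> 'v) \<Rightarrow> 'v set" where
  "trbar m n p sc E = module.span sc
     (\<Union>{weight_space m n sc E \<nu> |\<nu>. \<forall>i. p < i \<and> i \<le> m \<longrightarrow> \<nu> (Ev i) = 0})"

definition tr_sing ::
  "nat \<Rightarrow> nat \<Rightarrow> nat \<Rightarrow> (complex \<Rightarrow> 'v::ab_group_add \<Rightarrow> 'v) \<Rightarrow> (idx \<Rightarrow> idx \<Rightarrow> 'v \<Rightarrow> 'v)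
     \<Rightarrow> (idx \<Rightarrow> complex) \<Rightarrow> 'v set" where
  "tr_sing m n p sc E \<mu> = {v \<in> trbar m n p sc E.
      (\<forall>i\<in>Idx p n. E i i v = sc (\<mu> i) v)
    \<and> (\<forall>i\<in>Idx p n. \<forall>j\<in>Idx p n. std_less i j \<longrightarrow> E i j v = 0)}"

definition sigma_sing ::
  "nat \<Rightarrow> nat \<Rightarrow> nat \<Rightarrow> (complex \<Rightarrow> 'v::ab_group_add \<Rightarrow> 'v) \<Rightarrow> (idx \<Rightarrow> idx \<Rightarrow> 'v \<Rightarrow> 'v)
     \<Rightarrow> (idx \<Rightarrow> complex) \<Rightarrow> 'v set" where
  "sigma_sing m n p sc E \<mu> = {v \<in> weight_space m n sc E \<mu>.
      \<forall>i\<in>Idx m n. \<forall>j\<in>Idx m n. sig_less p i j \<longrightarrow> E i j v = 0}"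

(* partitions as functions nat => nat, 1-indexed (lambda_1 >= lambda_2 >= ...),
   finitely supported, with the unused entry lambda 0 = 0 *)
definition is_partition :: "(nat \<Rightarrow> nat) \<Rightarrow> bool" where
  "is_partition lam \<longleftrightarrow> lam 0 = 0 \<and> (\<forall>i\<ge>1. lam (Suc i) \<le> lam i) \<and> finite {i. lam i \<noteq> 0}"

definition hook_partition :: "nat \<Rightarrow> nat \<Rightarrow> (nat \<Rightarrow> nat) \<Rightarrow> bool" where
  "hook_partition p n lam \<longleftrightarrow> is_partition lam \<and> lam (p + 1) \<le> n"

definition conj_part :: "(nat \<Rightarrow> nat) \<Rightarrow> nat \<Rightarrow> nat" where
  "conj_part lam i = card {j. 1 \<le> j \<and> i \<le> lam j}"

(* bar lambda^{p|n}; natural-number subtraction a - b equals <a - b> = max(a-b,0) *)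
fun lam_bar_pn :: "nat \<Rightarrow> nat \<Rightarrow> (nat \<Rightarrow> nat) \<Rightarrow> idx \<Rightarrow> complex" where
  "lam_bar_pn p n lam (Ev i) = (if i \<le> p then of_nat (lam i) else 0)"
| "lam_bar_pn p n lam (Od k) = of_nat (conj_part lam k - p)"

fun lam_bar_sigma :: "nat \<Rightarrow> nat \<Rightarrow> (nat \<Rightarrow> nat) \<Rightarrow> idx \<Rightarrow> complex" where
  "lam_bar_sigma p n lam (Ev i) = (if i \<le> p then of_nat (lam i) else of_nat (lam i - n))"
| "lam_bar_sigma p n lam (Od k) = of_nat (conj_part lam k - p)"

end

theory Submission
  imports Defs
begin

text \<open>
  In the order \<open><\<^sub>\<sigma>\<^sub>p\<close> the indices of \<open>I\<^sub>p\<^sub>|\<^sub>n\<close> form an initial segment, so the only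
  \<open>\<sigma>\<^sub>p\<close>-raising operators \<open>E\<^sub>i\<^sub>j\<close> outside \<open>gl\<^sub>p\<^sub>|\<^sub>n\<close> are those with \<open>p < j \<le> m\<close>.
  The hook condition gives \<open>\<lambda>\<^sub>j \<le> \<lambda>\<^sub>p\<^sub>+\<^sub>1 \<le> n\<close> for these \<open>j\<close>, so the weight \<open>\<lambda>\<^sup>\<sigma>\<^sup>p\<close>
  vanishes there and agrees with \<open>\<lambda>\<^sup>p\<^sup>|\<^sup>n\<close> elsewhere. Hence a vector of the truncation
  with \<open>gl\<^sub>p\<^sub>|\<^sub>n\<close>-weight \<open>\<lambda>\<^sup>p\<^sup>|\<^sup>n\<close> already has \<open>gl\<^sub>m\<^sub>|\<^sub>n\<close>-weight \<open>\<lambda>\<^sup>\<sigma>\<^sup>p\<close>, and each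
  extra \<open>E\<^sub>i\<^sub>j\<close> would move it to a weight with entry \<open>-1\<close> at \<open>j\<close>, which does not
  occur in a polynomial module.
\<close>

lemma partition_antimono:
  assumes "is_partition lam" "1 \<le> a" "a \<le> b"
  shows "lam b \<le> lam a"
  using assms(3)
proof (induction b rule: dec_induct)
  case (step k)
  have "lam (Suc k) \<le> lam k"
    using assms(1,2) step(1) unfolding is_partition_def by auto
  with step.IH show ?case by simp
qed simp

lemma lam_bar_sigma_beyond_hook:
  assumes "hook_partition p n lam" "p < b"
  shows "lam_bar_sigma p n lam (Ev b) = 0"
proof -
  have "lam b \<le> lam (p + 1)"
    using assms partition_antimono[of lam "p + 1" b] unfolding hook_partition_def by simp
  with assms show ?thesis unfolding hook_partition_def by simp
qed

lemma lam_bar_pn_eq_lam_bar_sigma: "i \<in> Idx p n \<Longrightarrow> lam_bar_pn p n lam i = lam_bar_sigma p n lam i"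
  unfolding Idx_def by auto

lemma Idx_mono: "p \<le> m \<Longrightarrow> Idx p n \<subseteq> Idx m n"
  unfolding Idx_def by auto

lemma Idx_diff_Idx:
  assumes "i \<in> Idx m n" "i \<notin> Idx p n"
  obtains b where "i = Ev b" "p < b" "b \<le> m"
  using assms unfolding Idx_def by auto

lemma sig_less_irrefl: "\<not> sig_less p i i"
  by (cases i) auto

lemma sig_less_iff_std_less:
  "i \<in> Idx p n \<Longrightarrow> j \<in> Idx p n \<Longrightarrow> sig_less p i j \<longleftrightarrow> std_less i j"
  unfolding Idx_def by auto

lemma sig_less_Idx_initial:
  "i \<in> Idx m n \<Longrightarrow> j \<in> Idx p n \<Longrightarrow> sig_less p i j \<Longrightarrow> i \<in> Idx p n"
  unfolding Idx_def by (auto split: if_splits)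

lemma tr_sing_cong:
  "(\<And>i. i \<in> Idx p n \<Longrightarrow> \<mu> i = \<mu>' i) \<Longrightarrow> tr_sing m n p sc E \<mu> = tr_sing m n p sc E \<mu>'"
  unfolding tr_sing_def by simp

lemma glmn_module_vector_space: "is_glmn_module m n sc E V \<Longrightarrow> vector_space sc"
  by (simp add: is_glmn_module_def)

lemma glmn_module_vector_space_pair: "is_glmn_module m n sc E V \<Longrightarrow> vector_space_pair sc sc"
  by (simp add: vector_space_pair_def glmn_module_vector_space)

lemma glmn_module_linear:
  "is_glmn_module m n sc E V \<Longrightarrow> i \<in> Idx m n \<Longrightarrow> j \<in> Idx m n \<Longrightarrow> Vector_Spaces.linear sc sc (E i j)"
  by (simp add: is_glmn_module_def)

lemma glmn_module_diag_commutator: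
  assumes "is_glmn_module m n sc E V" "i \<in> Idx m n" "j \<in> Idx m n" "k \<in> Idx m n"
  shows "E k k (E i j v) - E i j (E k k v)
    = (if k = i then E i j v else 0) - (if j = k then E i j v else 0)"
proof -
  have "\<forall>i\<in>Idx m n. \<forall>j\<in>Idx m n. \<forall>k\<in>Idx m n. \<forall>l\<in>Idx m n. \<forall>v.
        (let s = (\<lambda>x. if (ipar i \<noteq> ipar j) \<and> (ipar k \<noteq> ipar l) then - x else x) in
         E i j (E k l v) - s (E k l (E i j v))
           = (if j = k then E i l v else 0) - s (if l = i then E k j v else 0))"
    using assms(1) unfolding is_glmn_module_def by (elim conjE)
  \<comment> \<open>\<open>E\<^sub>k\<^sub>k\<close> is even, so the supercommutator is an ordinary commutator.\<close>
  from this[rule_format, OF assms(4,4,2,3), of v]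
  have "E k k (E i j v) - E i j (E k k v)
    = (if k = i then E k j v else 0) - (if j = k then E i k v else 0)"
    by (simp add: Let_def)
  then show ?thesis by auto
qed

lemma E_weight_space:
  assumes module: "is_glmn_module m n sc E V"
    and v: "v \<in> weight_space m n sc E \<mu>" and i: "i \<in> Idx m n" and j: "j \<in> Idx m n"
  shows "E i j v \<in> weight_space m n sc E
    (\<lambda>k. \<mu> k + (if k = i then 1 else 0) - (if k = j then 1 else 0))"
  unfolding weight_space_def
proof (intro CollectI ballI)
  fix k assume k: "k \<in> Idx m n"
  interpret vector_space_pair sc sc
    by (rule glmn_module_vector_space_pair[OF module])
  have "E i j (E k k v) = sc (\<mu> k) (E i j v)"
    using v k linear_scale[OF glmn_module_linear[OF module i j]]
    unfolding weight_space_def by auto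
  with glmn_module_diag_commutator[OF module i j k, of v]
  have "E k k (E i j v)
    = sc (\<mu> k) (E i j v) + (if k = i then E i j v else 0) - (if j = k then E i j v else 0)"
    by (simp add: algebra_simps)
  then show "E k k (E i j v)
    = sc (\<mu> k + (if k = i then 1 else 0) - (if k = j then 1 else 0)) (E i j v)"
    by (auto simp: vs1.scale_left_distrib vs1.scale_left_diff_distrib)
qed

lemma E_annihilates_weight_zero:
  assumes module: "is_glmn_module m n sc E V" and poly: "polynomial_module m n sc E"
    and v: "v \<in> weight_space m n sc E \<mu>" and i: "i \<in> Idx m n" and j: "j \<in> Idx m n"
    and "i \<noteq> j" "\<mu> j = 0"
  shows "E i j v = 0"
proof -
  define \<mu>' where "\<mu>' = (\<lambda>k. \<mu> k + (if k = i then 1 else 0) - (if k = j then 1 else 0))"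
  have Eijv: "E i j v \<in> weight_space m n sc E \<mu>'"
    unfolding \<mu>'_def by (rule E_weight_space[OF module v i j])
  have "\<mu>' j = -1"
    using assms unfolding \<mu>'_def by simp
  then have "\<mu>' j \<notin> \<nat>"
    by (auto elim!: Nats_cases simp: complex_eq_iff)
  then have "weight_space m n sc E \<mu>' = {0}"
    using poly j unfolding polynomial_module_def by blast
  with Eijv show ?thesis by blast
qed

lemma trbar_diag_beyond_p:
  assumes module: "is_glmn_module m n sc E V"
    and v: "v \<in> trbar m n p sc E" and "p < b" "b \<le> m"
  shows "E (Ev b) (Ev b) v = 0"
proof -
  interpret vector_space_pair sc sc
    by (rule glmn_module_vector_space_pair[OF module])
  have b: "Ev b \<in> Idx m n"
    using assms unfolding Idx_def by auto
  show ?thesis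
  proof (rule linear_eq_0_on_span[OF glmn_module_linear[OF module b b]])
    show "v \<in> vs1.span (\<Union>{weight_space m n sc E \<nu> |\<nu>. \<forall>i. p < i \<and> i \<le> m \<longrightarrow> \<nu> (Ev i) = 0})"
      using v unfolding trbar_def .
  next
    fix x assume "x \<in> \<Union>{weight_space m n sc E \<nu> |\<nu>. \<forall>i. p < i \<and> i \<le> m \<longrightarrow> \<nu> (Ev i) = 0}"
    with b \<open>p < b\<close> \<open>b \<le> m\<close> show "E (Ev b) (Ev b) x = 0"
      unfolding weight_space_def by auto
  qed
qed

lemma weight_space_subset_trbar:
  assumes module: "is_glmn_module m n sc E V"
    and vanish: "\<And>b. p < b \<Longrightarrow> b \<le> m \<Longrightarrow> \<mu> (Ev b) = 0"
  shows "weight_space m n sc E \<mu> \<subseteq> trbar m n p sc E"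
proof -
  interpret vector_space sc
    by (rule glmn_module_vector_space[OF module])
  show ?thesis
    unfolding trbar_def using vanish by (blast intro: span_base)
qed

lemma tr_sing_subset_weight_space:
  assumes module: "is_glmn_module m n sc E V"
    and vanish: "\<And>b. p < b \<Longrightarrow> b \<le> m \<Longrightarrow> \<mu> (Ev b) = 0"
  shows "tr_sing m n p sc E \<mu> \<subseteq> weight_space m n sc E \<mu>"
proof
  fix v assume v: "v \<in> tr_sing m n p sc E \<mu>"
  interpret vector_space sc
    by (rule glmn_module_vector_space[OF module])
  show "v \<in> weight_space m n sc E \<mu>"
    unfolding weight_space_def
  proof (intro CollectI ballI)
    fix i assume i: "i \<in> Idx m n"
    show "E i i v = sc (\<mu> i) v"
    proof (cases "i \<in> Idx p n")
      case True
      with v show ?thesis unfolding tr_sing_def by auto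
    next
      case False
      with i obtain b where "i = Ev b" "p < b" "b \<le> m"
        by (rule Idx_diff_Idx)
      with v vanish show ?thesis
        using trbar_diag_beyond_p[OF module] unfolding tr_sing_def by auto
    qed
  qed
qed

lemma tr_sing_subset_sigma_sing:
  assumes module: "is_glmn_module m n sc E V" and poly: "polynomial_module m n sc E"
    and vanish: "\<And>b. p < b \<Longrightarrow> b \<le> m \<Longrightarrow> \<mu> (Ev b) = 0"
  shows "tr_sing m n p sc E \<mu> \<subseteq> sigma_sing m n p sc E \<mu>"
proof
  fix v assume v: "v \<in> tr_sing m n p sc E \<mu>"
  have wt: "v \<in> weight_space m n sc E \<mu>"
    using tr_sing_subset_weight_space[OF module, of p \<mu>] vanish v by blast
  have "E i j v = 0" if i: "i \<in> Idx m n" and j: "j \<in> Idx m n" and ij: "sig_less p i j" for i j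
  proof (cases "j \<in> Idx p n")
    case True
    then have "i \<in> Idx p n"
      using sig_less_Idx_initial[OF i _ ij] by blast
    with True ij v show ?thesis
      unfolding tr_sing_def by (auto simp: sig_less_iff_std_less)
  next
    case False
    with j obtain b where "j = Ev b" "p < b" "b \<le> m"
      by (rule Idx_diff_Idx)
    moreover have "i \<noteq> j"
      using ij sig_less_irrefl by blast
    ultimately show ?thesis
      using E_annihilates_weight_zero[OF module poly wt i j] vanish by blast
  qed
  with wt show "v \<in> sigma_sing m n p sc E \<mu>"
    unfolding sigma_sing_def by blast
qed

lemma sigma_sing_subset_tr_sing:
  assumes module: "is_glmn_module m n sc E V"
    and "p \<le> m" and vanish: "\<And>b. p < b \<Longrightarrow> b \<le> m \<Longrightarrow> \<mu> (Ev b) = 0"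
  shows "sigma_sing m n p sc E \<mu> \<subseteq> tr_sing m n p sc E \<mu>"
proof
  fix v assume v: "v \<in> sigma_sing m n p sc E \<mu>"
  then have wt: "v \<in> weight_space m n sc E \<mu>"
    unfolding sigma_sing_def by blast
  have sub: "Idx p n \<subseteq> Idx m n"
    using \<open>p \<le> m\<close> by (rule Idx_mono)
  have "v \<in> trbar m n p sc E"
    using weight_space_subset_trbar[OF module, of p \<mu>] vanish wt by blast
  moreover have "\<forall>i\<in>Idx p n. E i i v = sc (\<mu> i) v"
    using wt sub unfolding weight_space_def by blast
  moreover have "\<forall>i\<in>Idx p n. \<forall>j\<in>Idx p n. std_less i j \<longrightarrow> E i j v = 0"
    using v sub unfolding sigma_sing_def by (blast dest: sig_less_iff_std_less[THEN iffD2])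
  ultimately show "v \<in> tr_sing m n p sc E \<mu>"
    unfolding tr_sing_def by blast
qed

lemma tr_sing_eq_sigma_sing:
  assumes "is_glmn_module m n sc E V" "polynomial_module m n sc E" "p \<le> m"
    and "\<And>b. p < b \<Longrightarrow> b \<le> m \<Longrightarrow> \<mu> (Ev b) = 0"
  shows "tr_sing m n p sc E \<mu> = sigma_sing m n p sc E \<mu>"
  using tr_sing_subset_sigma_sing[OF assms(1,2)] sigma_sing_subset_tr_sing[OF assms(1,3)] assms(4)
  by blast

theorem corollary3p13:
  fixes m n p :: nat
    and sc :: "complex \<Rightarrow> 'v::ab_group_add \<Rightarrow> 'v"
    and E :: "idx \<Rightarrow> idx \<Rightarrow> 'v \<Rightarrow> 'v"
    and V :: "bool \<Rightarrow> 'v set"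
    and lam :: "nat \<Rightarrow> nat"
  assumes "1 \<le> p" and "p \<le> m"
    and "is_glmn_module m n sc E V"
    and "polynomial_module m n sc E"
    and "hook_partition p n lam"
  shows "tr_sing m n p sc E (lam_bar_pn p n lam) = sigma_sing m n p sc E (lam_bar_sigma p n lam)"
proof -
  \<comment> \<open>The argument also works for \<open>p = 0\<close>.\<close>
  have "tr_sing m n p sc E (lam_bar_pn p n lam) = tr_sing m n p sc E (lam_bar_sigma p n lam)"
    by (rule tr_sing_cong) (rule lam_bar_pn_eq_lam_bar_sigma)
  also have "\<dots> = sigma_sing m n p sc E (lam_bar_sigma p n lam)"
    by (rule tr_sing_eq_sigma_sing[OF assms(3,4,2)]) (blast intro: lam_bar_sigma_beyond_hook[OF assms(5)])
  finally show ?thesis .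
qed

end
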